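(* Let $\mathbb{F}$ be a field and let $n>4$ be an integer. Then for each $p\in\{0,\ldots,n-3\}$ there exists a unital $\mathbb{F}$-algebra $\mathcal{A}$ with $\dim\mathcal{A}=n$ and $l(\mathcal{A})=2^{n-3}+2^{p}$.
   Context: All algebras are finite-dimensional, unital, not necessarily associative algebras over the field $\mathbb{F}$. For a finite generating set $S$ of an algebra $\mathcal{A}$, a word in $S$ is any product (with any bracketing) of finitely many elements of $S$; its length is the number of factors, and the unit $1$ is regarded as a word of length $0$. Let $L_i(S)$ denote the linear span of all words in $S$ of length at most $i$ (so $L_0(S)=\mathbb{F}$). The length of $S$ is $l(S)=\min\{k\ge 0: L_k(S)=\mathcal{A}\}$, and the length of $\mathcal{A}$ is $l(\mathcal{A})=\max\{l(S): S \text{ a finite generating set of } \mathcal{A}\}$. *)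

theory Defs
  imports Main
begin

text \<open>An n-dimensional (not necessarily associative) algebra over a field 'a is modelled
  on the coordinate space of functions nat => 'a vanishing outside {0..<n}, with
  multiplication given by structure constants c i j k (e_i * e_j = sum_k c i j k e_k).
  Every n-dimensional algebra is isomorphic to one of these.\<close>

definition carrier_vs :: "nat \<Rightarrow> (nat \<Rightarrow> 'a::zero) set" where
  "carrier_vs n = {x. \<forall>k\<ge>n. x k = 0}"

definition amult :: "nat \<Rightarrow> (nat \<Rightarrow> nat \<Rightarrow> nat \<Rightarrow> 'a::field) \<Rightarrow> (nat \<Rightarrow> 'a) \<Rightarrow> (nat \<Rightarrow> 'a) \<Rightarrow> (nat \<Rightarrow> 'a)" where
  "amult n c x y = (\<lambda>k. if k < n then (\<Sum>i<n. \<Sum>j<n. x i * y j * c i j k) else 0)"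

definition is_unit :: "nat \<Rightarrow> (nat \<Rightarrow> nat \<Rightarrow> nat \<Rightarrow> 'a::field) \<Rightarrow> (nat \<Rightarrow> 'a) \<Rightarrow> bool" where
  "is_unit n c e \<longleftrightarrow> e \<in> carrier_vs n \<and>
     (\<forall>x\<in>carrier_vs n. amult n c e x = x \<and> amult n c x e = x)"

definition unital :: "nat \<Rightarrow> (nat \<Rightarrow> nat \<Rightarrow> nat \<Rightarrow> 'a::field) \<Rightarrow> bool" where
  "unital n c \<longleftrightarrow> (\<exists>e. is_unit n c e)"

definition one_elem :: "nat \<Rightarrow> (nat \<Rightarrow> nat \<Rightarrow> nat \<Rightarrow> 'a::field) \<Rightarrow> (nat \<Rightarrow> 'a)" where
  "one_elem n c = (THE e. is_unit n c e)"

inductive word :: "nat \<Rightarrow> (nat \<Rightarrow> nat \<Rightarrow> nat \<Rightarrow> 'a::field) \<Rightarrow> (nat \<Rightarrow> 'a) set \<Rightarrow> nat \<Rightarrow> (nat \<Rightarrow> 'a) \<Rightarrow> bool"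
  for n c S where
  word_one: "word n c S 0 (one_elem n c)"
| word_gen: "s \<in> S \<Longrightarrow> word n c S 1 s"
| word_mult: "word n c S i a \<Longrightarrow> word n c S j b \<Longrightarrow> word n c S (i + j) (amult n c a b)"

definition lin_span :: "(nat \<Rightarrow> 'a::field) set \<Rightarrow> (nat \<Rightarrow> 'a) set" where
  "lin_span W = {v. \<exists>T f. finite T \<and> T \<subseteq> W \<and> v = (\<lambda>k. \<Sum>w\<in>T. f w * w k)}"

definition Lspan :: "nat \<Rightarrow> (nat \<Rightarrow> nat \<Rightarrow> nat \<Rightarrow> 'a::field) \<Rightarrow> (nat \<Rightarrow> 'a) set \<Rightarrow> nat \<Rightarrow> (nat \<Rightarrow> 'a) set" where
  "Lspan n c S i = lin_span {w. \<exists>j\<le>i. word n c S j w}"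

definition generates :: "nat \<Rightarrow> (nat \<Rightarrow> nat \<Rightarrow> nat \<Rightarrow> 'a::field) \<Rightarrow> (nat \<Rightarrow> 'a) set \<Rightarrow> bool" where
  "generates n c S \<longleftrightarrow> finite S \<and> S \<subseteq> carrier_vs n \<and> (\<exists>k. Lspan n c S k = carrier_vs n)"

definition set_length :: "nat \<Rightarrow> (nat \<Rightarrow> nat \<Rightarrow> nat \<Rightarrow> 'a::field) \<Rightarrow> (nat \<Rightarrow> 'a) set \<Rightarrow> nat" where
  "set_length n c S = (LEAST k. Lspan n c S k = carrier_vs n)"

definition alg_length_is :: "nat \<Rightarrow> (nat \<Rightarrow> nat \<Rightarrow> nat \<Rightarrow> 'a::field) \<Rightarrow> nat \<Rightarrow> bool" where
  "alg_length_is n c m \<longleftrightarrow>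
     (\<exists>S. generates n c S \<and> set_length n c S = m) \<and>
     (\<forall>S. generates n c S \<longrightarrow> set_length n c S \<le> m)"

end

theory Submission
  imports Defs "HOL.Modules" "HOL-Library.Function_Algebras"
begin

text \<open>
  Take the algebra with basis e_0 = 1, e_1, ..., e_(n-1) whose only nonzero products of
  non-unit basis vectors are e_i e_i = e_(i+1) for 1 <= i <= n - 3 and e_(n-2) e_(p+1) = e_(n-1).
  Giving e_k the weight 2^(k-1) for 1 <= k <= n - 2 and e_(n-1) the weight 2^(n-3) + 2^p makes
  it graded, so for the generating set {e_1} every word is homogeneous and e_(n-1) is not
  reached by words shorter than 2^(n-3) + 2^p.

  Conversely, e_1 never occurs in a product of two elements with zero e_1-coordinate, so every
  generating set contains some s with s_1 <> 0.  For t = s - s_0 e_0 the repeated squares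
  t^(2^i) have leading term s_1^(2^i) e_(i+1), and t^(2^(n-3)) t^(2^p) is a nonzero multiple of
  e_(n-1).  Together with e_0 these elements of L_(2^(n-3) + 2^p) form a triangular basis.
\<close>

section \<open>Coordinate vectors\<close>

lemma sum_fun_apply: "sum f A x = (\<Sum>a\<in>A. f a x)"
  by (induction A rule: infinite_finite_induct) auto

interpretation coord: module "\<lambda>a (x :: nat \<Rightarrow> 'a::field) k. a * x k"
  by unfold_locales (auto simp: algebra_simps)

lemma lin_span_eq_span: "lin_span W = coord.span W"
  unfolding lin_span_def coord.span_explicit
  by (auto simp: sum_fun_apply fun_eq_iff)

definition unit_vec :: "nat \<Rightarrow> nat \<Rightarrow> 'a::zero_neq_one" where
  "unit_vec j = (\<lambda>k. if k = j then 1 else 0)"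

lemma unit_vec_in_carrier_vs: "j < n \<Longrightarrow> unit_vec j \<in> carrier_vs n"
  by (simp add: unit_vec_def carrier_vs_def)

lemma sum_unit_vec_mult:
  fixes f :: "nat \<Rightarrow> 'a::semiring_1"
  shows "finite A \<Longrightarrow> (\<Sum>i\<in>A. unit_vec j i * f i) = (if j \<in> A then f j else 0)"
  by (subst sum.cong[OF refl, of _ _ "\<lambda>i. if i = j then f j else 0"]) (auto simp: unit_vec_def)

lemma sum_mult_unit_vec:
  fixes f :: "nat \<Rightarrow> 'a::semiring_1"
  shows "finite A \<Longrightarrow> (\<Sum>i\<in>A. f i * unit_vec i k) = (if k \<in> A then f k else 0)"
  by (subst sum.cong[OF refl, of _ _ "\<lambda>i. if k = i then f k else 0"]) (auto simp: unit_vec_def)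

lemma subspace_carrier_vs: "coord.subspace (carrier_vs n)"
  by (simp add: coord.subspace_def carrier_vs_def)

lemma carrier_vs_eq_sum_unit_vec:
  fixes x :: "nat \<Rightarrow> 'a::field"
  assumes "x \<in> carrier_vs n"
  shows "x = (\<Sum>j<n. (\<lambda>k. x j * unit_vec j k))"
  using assms by (auto simp: fun_eq_iff sum_fun_apply sum_mult_unit_vec carrier_vs_def)

lemma span_coord_eq_zero:
  assumes "\<And>w. w \<in> W \<Longrightarrow> w k = 0" and "x \<in> coord.span W"
  shows "x k = 0"
proof -
  have "coord.subspace {x. x k = 0}"
    by (simp add: coord.subspace_def)
  then have "coord.span W \<subseteq> {x. x k = 0}"
    using assms(1) by (intro coord.span_minimal) auto
  then show ?thesis
    using assms(2) by blast
qed

lemma carrier_vs_subset_span_triangular: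
  assumes "\<And>k. k < n \<Longrightarrow> \<exists>x\<in>coord.span W. x \<in> carrier_vs n \<and> x k \<noteq> 0 \<and> (\<forall>l<k. x l = 0)"
  shows "carrier_vs n \<subseteq> coord.span W"
proof -
  have basis: "unit_vec k \<in> coord.span W" if "k < n" for k
    using that
  proof (induction "n - k" arbitrary: k rule: less_induct)
    case less
    obtain x where x: "x \<in> coord.span W" "x \<in> carrier_vs n" "x k \<noteq> 0" "\<forall>l<k. x l = 0"
      using assms less.prems by blast
    let ?tail = "\<Sum>j\<in>{k<..<n}. (\<lambda>l. x j * unit_vec j l)"
    have "?tail \<in> coord.span W"
      using less by (intro coord.span_sum coord.span_scale) auto
    then have "(\<lambda>l. (1 / x k) * (x - ?tail) l) \<in> coord.span W"
      using x(1) by (intro coord.span_scale coord.span_diff)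
    moreover have "x - ?tail = (\<lambda>l. x k * unit_vec k l)"
      using x(2,4) less.prems
      by (auto simp: fun_eq_iff sum_fun_apply sum_mult_unit_vec carrier_vs_def)
        (auto simp: unit_vec_def)
    ultimately show ?case
      using x(3) by simp
  qed
  show ?thesis
  proof
    fix x :: "nat \<Rightarrow> 'a"
    assume "x \<in> carrier_vs n"
    then have "x = (\<Sum>j<n. (\<lambda>k. x j * unit_vec j k))"
      by (rule carrier_vs_eq_sum_unit_vec)
    also have "\<dots> \<in> coord.span W"
      using basis by (auto intro!: coord.span_sum coord.span_scale)
    finally show "x \<in> coord.span W" .
  qed
qed

section \<open>Multiplication by structure constants\<close>

lemma amult_in_carrier_vs: "amult n c x y \<in> carrier_vs n"
  by (simp add: amult_def carrier_vs_def)

lemma amult_zero_left: "amult n c 0 y = 0"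
  by (simp add: amult_def fun_eq_iff)

lemma amult_zero_right: "amult n c x 0 = 0"
  by (simp add: amult_def fun_eq_iff)

lemma amult_scale_add_left:
  "amult n c ((\<lambda>k. a * x k) + x') y = (\<lambda>k. a * amult n c x y k) + amult n c x' y"
  by (simp add: amult_def fun_eq_iff sum_distrib_left sum.distrib algebra_simps)

lemma amult_scale_add_right:
  "amult n c x ((\<lambda>k. a * y k) + y') = (\<lambda>k. a * amult n c x y k) + amult n c x y'"
  by (simp add: amult_def fun_eq_iff sum_distrib_left sum.distrib algebra_simps)

lemma amult_in_span:
  assumes "x \<in> coord.span A" "y \<in> coord.span B"
    and "\<And>a b. a \<in> A \<Longrightarrow> b \<in> B \<Longrightarrow> amult n c a b \<in> coord.span C"
  shows "amult n c x y \<in> coord.span C"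
proof -
  have "amult n c a y \<in> coord.span C" if "a \<in> A" for a
    using assms(2)
  proof (induction rule: coord.span_induct_alt)
    case base
    show ?case
      unfolding amult_zero_right by (rule coord.span_zero)
  next
    case (step d b y')
    then show ?case
      unfolding amult_scale_add_right using assms(3) that
      by (intro coord.span_add coord.span_scale) auto
  qed
  with assms(1) show ?thesis
  proof (induction rule: coord.span_induct_alt)
    case base
    show ?case
      unfolding amult_zero_left by (rule coord.span_zero)
  next
    case (step d a x')
    then show ?case
      unfolding amult_scale_add_left by (intro coord.span_add coord.span_scale) auto
  qed
qed

lemma amult_coord_nonzeroE:
  assumes "amult n c x y k \<noteq> 0"
  obtains i j where "i < n" "j < n" "k < n" "x i \<noteq> 0" "y j \<noteq> 0" "c i j k \<noteq> 0"
proof -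
  have "k < n" and "(\<Sum>i<n. \<Sum>j<n. x i * y j * c i j k) \<noteq> 0"
    using assms by (auto simp: amult_def split: if_splits)
  then show thesis
    by (auto elim!: sum.not_neutral_contains_not_neutral intro: that)
qed

lemma amult_eq_single_term:
  assumes "a < n" "b < n" "k < n"
    and "\<And>i j. i < n \<Longrightarrow> j < n \<Longrightarrow> x i * y j * c i j k \<noteq> 0 \<Longrightarrow> i = a \<and> j = b"
  shows "amult n c x y k = x a * y b * c a b k"
proof -
  have "x i * y j * c i j k = (if j = b then if i = a then x a * y b * c a b k else 0 else 0)"
    if "i < n" "j < n" for i j
    using assms(4)[OF that] by (cases "i = a \<and> j = b") auto
  then have "amult n c x y k
      = (\<Sum>i<n. \<Sum>j<n. if j = b then if i = a then x a * y b * c a b k else 0 else 0)"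
    unfolding amult_def using assms(3) by simp
  also have "\<dots> = x a * y b * c a b k"
    using assms(1,2) by simp
  finally show ?thesis .
qed

lemma one_elem_eqI: "is_unit n c e \<Longrightarrow> one_elem n c = e"
  unfolding one_elem_def
proof (rule the_equality)
  fix e'
  assume "is_unit n c e" "is_unit n c e'"
  then have "e' = amult n c e' e" and "amult n c e' e = e"
    by (auto simp: is_unit_def)
  then show "e' = e"
    by simp
qed

lemma amult_unit_vec_left:
  assumes "i < n" "k < n"
  shows "amult n c (unit_vec i) y k = (\<Sum>j<n. y j * c i j k)"
proof -
  have "amult n c (unit_vec i) y k = (\<Sum>i'<n. unit_vec i i' * (\<Sum>j<n. y j * c i' j k))"
    using assms(2) by (simp add: amult_def sum_distrib_left mult.assoc)
  then show ?thesis
    using assms(1) by (simp add: sum_unit_vec_mult)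
qed

lemma amult_unit_vec_right:
  assumes "j < n" "k < n"
  shows "amult n c x (unit_vec j) k = (\<Sum>i<n. x i * c i j k)"
proof -
  have "amult n c x (unit_vec j) k = (\<Sum>i<n. x i * (\<Sum>j'<n. unit_vec j j' * c i j' k))"
    using assms(2) by (simp add: amult_def sum_distrib_left mult.assoc mult.left_commute)
  then show ?thesis
    using assms(1) by (simp add: sum_unit_vec_mult)
qed

lemma is_unit_unit_vec_0:
  assumes "0 < n"
    and left: "\<And>j k. j < n \<Longrightarrow> k < n \<Longrightarrow> c 0 j k = unit_vec j k"
    and right: "\<And>i k. i < n \<Longrightarrow> k < n \<Longrightarrow> c i 0 k = unit_vec i k"
  shows "is_unit n c (unit_vec 0)"
  unfolding is_unit_def
proof (intro conjI ballI)
  show "unit_vec 0 \<in> carrier_vs n"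
    using assms(1) by (rule unit_vec_in_carrier_vs)
  fix x :: "nat \<Rightarrow> 'a"
  assume x: "x \<in> carrier_vs n"
  show "amult n c (unit_vec 0) x = x"
  proof
    fix k
    show "amult n c (unit_vec 0) x k = x k"
    proof (cases "k < n")
      case True
      then show ?thesis
        using assms by (simp add: amult_unit_vec_left left sum_mult_unit_vec)
    qed (use x in \<open>simp add: amult_def carrier_vs_def\<close>)
  qed
  show "amult n c x (unit_vec 0) = x"
  proof
    fix k
    show "amult n c x (unit_vec 0) k = x k"
    proof (cases "k < n")
      case True
      then show ?thesis
        using assms by (simp add: amult_unit_vec_right right sum_mult_unit_vec)
    qed (use x in \<open>simp add: amult_def carrier_vs_def\<close>)
  qed
qed

section \<open>Words and the length filtration\<close>

lemma one_elem_in_carrier_vs: "unital n c \<Longrightarrow> one_elem n c \<in> carrier_vs n"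
  unfolding unital_def using one_elem_eqI is_unit_def by metis

lemma word_in_carrier_vs:
  assumes "unital n c" "S \<subseteq> carrier_vs n" "word n c S i w"
  shows "w \<in> carrier_vs n"
  using assms(3)
  by induction (use assms(1,2) one_elem_in_carrier_vs amult_in_carrier_vs in auto)

lemma Lspan_eq_span: "Lspan n c S i = coord.span {w. \<exists>j\<le>i. word n c S j w}"
  by (simp add: Lspan_def lin_span_eq_span)

lemma word_in_Lspan: "word n c S j w \<Longrightarrow> j \<le> i \<Longrightarrow> w \<in> Lspan n c S i"
  unfolding Lspan_eq_span by (rule coord.span_base) auto

lemma Lspan_mono: "i \<le> j \<Longrightarrow> Lspan n c S i \<subseteq> Lspan n c S j"
  unfolding Lspan_eq_span by (rule coord.span_mono) (blast intro: order_trans)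

lemma Lspan_mult:
  assumes "x \<in> Lspan n c S i" "y \<in> Lspan n c S j"
  shows "amult n c x y \<in> Lspan n c S (i + j)"
  using assms unfolding Lspan_eq_span
proof (rule amult_in_span)
  fix a b
  assume "a \<in> {w. \<exists>i'\<le>i. word n c S i' w}" "b \<in> {w. \<exists>j'\<le>j. word n c S j' w}"
  then obtain i' j' where "i' \<le> i" "j' \<le> j" "word n c S (i' + j') (amult n c a b)"
    by (auto intro: word_mult)
  then show "amult n c a b \<in> coord.span {w. \<exists>k\<le>i + j. word n c S k w}"
    by (intro coord.span_base) (auto intro: add_mono)
qed

lemma Lspan_subset_carrier_vs:
  assumes "unital n c" "S \<subseteq> carrier_vs n"
  shows "Lspan n c S i \<subseteq> carrier_vs n"
  unfolding Lspan_eq_span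
  using word_in_carrier_vs[OF assms] by (intro coord.span_minimal subspace_carrier_vs) auto

abbreviation repeated_square ::
    "nat \<Rightarrow> (nat \<Rightarrow> nat \<Rightarrow> nat \<Rightarrow> 'a::field) \<Rightarrow> nat \<Rightarrow> (nat \<Rightarrow> 'a) \<Rightarrow> nat \<Rightarrow> 'a"
  where "repeated_square n c i \<equiv> (\<lambda>x. amult n c x x) ^^ i"

lemma repeated_square_in_Lspan:
  assumes "x \<in> Lspan n c S 1"
  shows "repeated_square n c i x \<in> Lspan n c S (2 ^ i)"
proof (induction i)
  case 0
  then show ?case
    using assms by simp
next
  case (Suc i)
  then show ?case
    using Lspan_mult[OF Suc Suc] by (simp add: mult_2)
qed

lemma alg_length_isI:
  assumes "finite S\<^sub>0" "S\<^sub>0 \<subseteq> carrier_vs n" "Lspan n c S\<^sub>0 m = carrier_vs n"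
    and "\<And>k. k < m \<Longrightarrow> Lspan n c S\<^sub>0 k \<noteq> carrier_vs n"
    and "\<And>S. generates n c S \<Longrightarrow> Lspan n c S m = carrier_vs n"
  shows "alg_length_is n c m"
proof -
  have "generates n c S\<^sub>0"
    unfolding generates_def using assms(1-3) by blast
  moreover have "set_length n c S\<^sub>0 = m"
    unfolding set_length_def
  proof (rule Least_equality)
    show "Lspan n c S\<^sub>0 m = carrier_vs n"
      by (rule assms(3))
    show "m \<le> k" if "Lspan n c S\<^sub>0 k = carrier_vs n" for k
      using assms(4) that not_le by blast
  qed
  moreover have "set_length n c S \<le> m" if "generates n c S" for S
    unfolding set_length_def using assms(5)[OF that] by (rule Least_le)
  ultimately show ?thesis
    unfolding alg_length_is_def by blast
qed

section \<open>Gradings and indecomposable coordinates\<close>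

definition graded :: "nat \<Rightarrow> (nat \<Rightarrow> nat \<Rightarrow> nat \<Rightarrow> 'a::zero) \<Rightarrow> (nat \<Rightarrow> nat) \<Rightarrow> bool" where
  "graded n c wt \<longleftrightarrow> (\<forall>i<n. \<forall>j<n. \<forall>k<n. c i j k \<noteq> 0 \<longrightarrow> wt k = wt i + wt j)"

definition homogeneous :: "nat \<Rightarrow> (nat \<Rightarrow> nat) \<Rightarrow> nat \<Rightarrow> (nat \<Rightarrow> 'a::zero) \<Rightarrow> bool" where
  "homogeneous n wt d x \<longleftrightarrow> (\<forall>k<n. x k \<noteq> 0 \<longrightarrow> wt k = d)"

lemma homogeneous_amult:
  assumes "graded n c wt" "homogeneous n wt d x" "homogeneous n wt e y"
  shows "homogeneous n wt (d + e) (amult n c x y)"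
  unfolding homogeneous_def
proof (intro allI impI)
  fix k
  assume "amult n c x y k \<noteq> 0"
  then obtain i j where "i < n" "j < n" "k < n" "x i \<noteq> 0" "y j \<noteq> 0" "c i j k \<noteq> 0"
    by (rule amult_coord_nonzeroE)
  then show "wt k = d + e"
    using assms unfolding graded_def homogeneous_def by metis
qed

lemma word_homogeneous:
  assumes "graded n c wt" "homogeneous n wt 0 (one_elem n c)" "\<And>s. s \<in> S \<Longrightarrow> homogeneous n wt 1 s"
    and "word n c S i w"
  shows "homogeneous n wt i w"
  using assms(4) by induction (use assms(1-3) homogeneous_amult in auto)

lemma Lspan_coord_eq_zero_if_weight_gt:
  assumes "graded n c wt" "homogeneous n wt 0 (one_elem n c)" "\<And>s. s \<in> S \<Longrightarrow> homogeneous n wt 1 s"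
    and "k < n" "m < wt k" "x \<in> Lspan n c S m"
  shows "x k = 0"
  using assms(6) unfolding Lspan_eq_span
proof (rule span_coord_eq_zero[rotated])
  fix w
  assume "w \<in> {w. \<exists>j\<le>m. word n c S j w}"
  then obtain j where "j \<le> m" "homogeneous n wt j w"
    using word_homogeneous[OF assms(1-3)] by blast
  then show "w k = 0"
    using assms(4,5) unfolding homogeneous_def by fastforce
qed

lemma amult_coord_eq_zero:
  assumes "\<And>i j. i < n \<Longrightarrow> j < n \<Longrightarrow> c i j k \<noteq> 0 \<Longrightarrow> i = k \<or> j = k"
    and "x k = 0" "y k = 0"
  shows "amult n c x y k = 0"
proof (rule ccontr)
  assume "amult n c x y k \<noteq> 0"
  then obtain i j where "i < n" "j < n" "x i \<noteq> 0" "y j \<noteq> 0" "c i j k \<noteq> 0"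
    by (rule amult_coord_nonzeroE)
  then show False
    using assms(1)[of i j] assms(2,3) by auto
qed

lemma generator_coord_nonzero:
  assumes "generates n c S" "k < n"
    and "\<And>i j. i < n \<Longrightarrow> j < n \<Longrightarrow> c i j k \<noteq> 0 \<Longrightarrow> i = k \<or> j = k"
    and "one_elem n c k = 0"
  shows "\<exists>s\<in>S. s k \<noteq> 0"
proof (rule ccontr)
  assume gens: "\<not> (\<exists>s\<in>S. s k \<noteq> 0)"
  have words: "w k = 0" if "word n c S i w" for i w
    using that
  proof induction
    case (word_mult i a j b)
    show ?case
      by (rule amult_coord_eq_zero[of n c k a b, OF assms(3) word_mult.IH])
  qed (use gens assms(4) in auto)
  obtain m where "Lspan n c S m = carrier_vs n"
    using assms(1) unfolding generates_def by blast
  then have "unit_vec k \<in> coord.span {w. \<exists>j\<le>m. word n c S j w}"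
    using unit_vec_in_carrier_vs[OF assms(2)] unfolding Lspan_eq_span by blast
  then have "unit_vec k k = (0::'a)"
    by (rule span_coord_eq_zero[rotated]) (auto intro: words)
  then show False
    by (simp add: unit_vec_def)
qed

section \<open>An algebra of length 2^(n-3) + 2^p\<close>

definition chain_alg :: "nat \<Rightarrow> nat \<Rightarrow> nat \<Rightarrow> nat \<Rightarrow> nat \<Rightarrow> 'a::field" where
  "chain_alg n p i j k =
     (if i = 0 then unit_vec j k
      else if j = 0 then unit_vec i k
      else if i = j \<and> i \<le> n - 3 \<and> k = Suc i then 1
      else if i = n - 2 \<and> j = Suc p \<and> k = n - 1 then 1
      else 0)"

definition chain_weight :: "nat \<Rightarrow> nat \<Rightarrow> nat \<Rightarrow> nat" where
  "chain_weight n p k =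
     (if k = 0 then 0 else if k \<le> n - 2 then 2 ^ (k - 1) else 2 ^ (n - 3) + 2 ^ p)"

locale chain_algebra =
  fixes n p :: nat
  assumes three_le_n: "3 \<le> n"
    and p_le: "p \<le> n - 3"
begin

lemma is_unit_chain_alg: "is_unit n (chain_alg n p) (unit_vec 0 :: nat \<Rightarrow> 'a::field)"
  using three_le_n by (intro is_unit_unit_vec_0) (auto simp: chain_alg_def)

lemma one_elem_chain_alg: "one_elem n (chain_alg n p) = (unit_vec 0 :: nat \<Rightarrow> 'a::field)"
  using is_unit_chain_alg by (rule one_elem_eqI)

lemma unital_chain_alg: "unital n (chain_alg n p :: nat \<Rightarrow> nat \<Rightarrow> nat \<Rightarrow> 'a::field)"
  unfolding unital_def using is_unit_chain_alg by blast

lemma graded_chain_alg: "graded n (chain_alg n p :: nat \<Rightarrow> nat \<Rightarrow> nat \<Rightarrow> 'a::field) (chain_weight n p)"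
  unfolding graded_def
proof (intro allI impI)
  fix i j k
  assume "i < n" "j < n" "k < n" "(chain_alg n p i j k :: 'a) \<noteq> 0"
  then consider "i = 0" "j = k" | "j = 0" "i = k"
    | "i = j" "0 < i" "i \<le> n - 3" "k = Suc i" | "i = n - 2" "j = Suc p" "k = n - 1"
    by (auto simp: chain_alg_def unit_vec_def split: if_splits)
  then show "chain_weight n p k = chain_weight n p i + chain_weight n p j"
  proof cases
    case 3
    moreover have "Suc i \<le> n - 2"
      using 3 three_le_n by linarith
    ultimately have "chain_weight n p k = 2 ^ i" and "chain_weight n p i = 2 ^ (i - 1)"
      by (simp_all add: chain_weight_def)
    then show ?thesis
      using 3 by (simp add: power_Suc[symmetric] mult_2[symmetric])
  next
    case 4
    moreover have "0 < n - 2" "Suc p \<le> n - 2" "\<not> n - 1 \<le> n - 2"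
      using three_le_n p_le by linarith+
    ultimately show ?thesis
      by (simp add: chain_weight_def)
  qed (auto simp: chain_weight_def)
qed

lemma chain_alg_coord_1_nonzero:
  assumes "(chain_alg n p i j 1 :: 'a::field) \<noteq> 0"
  shows "i = 1 \<or> j = 1"
  using assms three_le_n by (auto simp: chain_alg_def unit_vec_def split: if_splits)

lemma square_coord_shift:
  fixes x :: "nat \<Rightarrow> 'a::field"
  assumes "0 < q" "q \<le> n - 3" "\<And>l. l < q \<Longrightarrow> x l = 0"
  shows "\<And>l. l \<le> q \<Longrightarrow> amult n (chain_alg n p) x x l = 0"
    and "amult n (chain_alg n p) x x (Suc q) = x q ^ 2"
proof -
  have nonzero: "i = j \<and> k = Suc i \<and> q \<le> i"
    if "i < n" "j < n" "x i * x j * chain_alg n p i j k \<noteq> 0" "k \<le> Suc q" for i j k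
  proof -
    have "x i \<noteq> 0" "x j \<noteq> 0" and c: "(chain_alg n p i j k :: 'a) \<noteq> 0"
      using that(3) by auto
    then have "q \<le> i" "q \<le> j"
      by (meson assms(3) not_le)+
    moreover have "k \<noteq> n - 1"
      using that(4) assms(2) three_le_n by linarith
    ultimately show ?thesis
      using c assms(1) by (auto simp: chain_alg_def unit_vec_def split: if_splits)
  qed
  show "amult n (chain_alg n p) x x l = 0" if "l \<le> q" for l
  proof (rule ccontr)
    assume "amult n (chain_alg n p) x x l \<noteq> 0"
    then obtain i j where ij: "i < n" "j < n" "x i * x j * chain_alg n p i j l \<noteq> 0"
      by (auto elim: amult_coord_nonzeroE)
    have "l = Suc i \<and> q \<le> i"
      using nonzero[OF ij] that by simp
    then show False
      using that by simp
  qed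
  have "Suc q < n"
    using assms(2) three_le_n by linarith
  moreover have "i = q \<and> j = q"
    if "i < n" "j < n" "x i * x j * chain_alg n p i j (Suc q) \<noteq> 0" for i j
    using nonzero[OF that] by simp
  ultimately have "amult n (chain_alg n p) x x (Suc q) = x q * x q * chain_alg n p q q (Suc q)"
    by (intro amult_eq_single_term) simp_all
  then show "amult n (chain_alg n p) x x (Suc q) = x q ^ 2"
    using assms(1,2) by (simp add: chain_alg_def power2_eq_square)
qed

lemma repeated_square_coords:
  fixes t :: "nat \<Rightarrow> 'a::field"
  assumes "t 0 = 0" "i \<le> n - 3"
  shows "(\<forall>l\<le>i. repeated_square n (chain_alg n p) i t l = 0)
    \<and> repeated_square n (chain_alg n p) i t (Suc i) = t 1 ^ 2 ^ i"
  using assms(2)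
proof (induction i)
  case 0
  then show ?case
    using assms(1) by simp
next
  case (Suc i)
  let ?x = "repeated_square n (chain_alg n p) i t"
  have "?x l = 0" if "l < Suc i" for l
    using Suc that by simp
  note shift = square_coord_shift[of "Suc i" ?x, OF _ Suc.prems this]
  have "?x (Suc i) ^ 2 = t 1 ^ 2 ^ Suc i"
    using Suc by (simp add: power_mult[symmetric] mult.commute)
  then show ?case
    using shift by simp
qed

lemma amult_eq_top_unit_vec:
  fixes u v :: "nat \<Rightarrow> 'a::field"
  assumes "\<And>i. i < n - 2 \<Longrightarrow> u i = 0" "\<And>j. j < Suc p \<Longrightarrow> v j = 0"
  shows "amult n (chain_alg n p) u v = (\<lambda>l. u (n - 2) * v (Suc p) * unit_vec (n - 1) l)"
proof
  fix l
  have "n - 2 \<noteq> 0" "\<not> n - 2 \<le> n - 3"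
    using three_le_n by linarith+
  then have top: "chain_alg n p (n - 2) (Suc p) l = (unit_vec (n - 1) l :: 'a)"
    by (simp add: chain_alg_def unit_vec_def)
  show "amult n (chain_alg n p) u v l = u (n - 2) * v (Suc p) * unit_vec (n - 1) l"
  proof (cases "l < n")
    case True
    have single: "i = n - 2 \<and> j = Suc p"
      if "i < n" "j < n" "u i * v j * chain_alg n p i j l \<noteq> 0" for i j
    proof -
      have "u i \<noteq> 0" "v j \<noteq> 0" and c: "(chain_alg n p i j l :: 'a) \<noteq> 0"
        using that(3) by auto
      then have "n - 2 \<le> i" "Suc p \<le> j"
        by (meson assms not_le)+
      then have "i \<noteq> 0" "j \<noteq> 0" "\<not> i \<le> n - 3"
        using three_le_n by linarith+
      then show ?thesis
        using c by (simp add: chain_alg_def split: if_splits)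
    qed
    have "n - 2 < n" "Suc p < n"
      using three_le_n p_le by linarith+
    then have "amult n (chain_alg n p) u v l
        = u (n - 2) * v (Suc p) * chain_alg n p (n - 2) (Suc p) l"
      using True single by (rule amult_eq_single_term)
    then show ?thesis
      by (simp add: top)
  qed (use three_le_n in \<open>auto simp: amult_def unit_vec_def\<close>)
qed

lemma chain_weight_top: "chain_weight n p (n - 1) = 2 ^ (n - 3) + 2 ^ p"
proof -
  have "n - 1 \<noteq> 0" "\<not> n - 1 \<le> n - 2"
    using three_le_n by linarith+
  then show ?thesis
    by (simp add: chain_weight_def)
qed

lemma unit_vec_top_notin_Lspan:
  assumes "k < 2 ^ (n - 3) + 2 ^ p"
  shows "unit_vec (n - 1) \<notin> Lspan n (chain_alg n p) {unit_vec 1 :: nat \<Rightarrow> 'a::field} k"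
proof
  assume top: "unit_vec (n - 1) \<in> Lspan n (chain_alg n p) {unit_vec 1 :: nat \<Rightarrow> 'a} k"
  have "homogeneous n (chain_weight n p) 0 (one_elem n (chain_alg n p) :: nat \<Rightarrow> 'a)"
    by (simp add: one_elem_chain_alg homogeneous_def unit_vec_def chain_weight_def)
  moreover have "homogeneous n (chain_weight n p) 1 (unit_vec 1 :: nat \<Rightarrow> 'a)"
    using three_le_n by (simp add: homogeneous_def unit_vec_def chain_weight_def)
  moreover have "n - 1 < n" "k < chain_weight n p (n - 1)"
    using three_le_n assms unfolding chain_weight_top by simp_all
  ultimately have "unit_vec (n - 1) (n - 1) = (0::'a)"
    using graded_chain_alg top by (intro Lspan_coord_eq_zero_if_weight_gt) auto
  then show False
    by (simp add: unit_vec_def)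
qed

lemma Lspan_has_leading_coord:
  fixes t :: "nat \<Rightarrow> 'a::field"
  assumes t: "t \<in> Lspan n (chain_alg n p) S 1" "t 0 = 0" "t 1 \<noteq> 0" and "k < n"
  shows "\<exists>x\<in>Lspan n (chain_alg n p) S (2 ^ (n - 3) + 2 ^ p). x k \<noteq> 0 \<and> (\<forall>l<k. x l = 0)"
proof -
  let ?L = "Lspan n (chain_alg n p) S"
  let ?sq = "\<lambda>i. repeated_square n (chain_alg n p) i t"
  have sq_coords: "\<forall>l\<le>i. ?sq i l = 0" "?sq i (Suc i) \<noteq> 0" if "i \<le> n - 3" for i
    using repeated_square_coords[of t, OF t(2) that] t(3) by simp_all
  consider "k = 0" | i where "k = Suc i" "i \<le> n - 3" | "k = n - 1"
    using assms(4) by (cases k) (auto, linarith)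
  then show ?thesis
  proof cases
    case 1
    have "unit_vec 0 \<in> ?L (2 ^ (n - 3) + 2 ^ p)"
      using word_in_Lspan[OF word_one[of n "chain_alg n p" S]] by (simp add: one_elem_chain_alg)
    moreover have "unit_vec 0 k \<noteq> (0::'a) \<and> (\<forall>l<k. unit_vec 0 l = (0::'a))"
      using 1 by (simp add: unit_vec_def)
    ultimately show ?thesis
      by blast
  next
    case (2 i)
    have "2 ^ i \<le> (2::nat) ^ (n - 3) + 2 ^ p"
      using 2 by (simp add: trans_le_add1)
    then have "?sq i \<in> ?L (2 ^ (n - 3) + 2 ^ p)"
      using repeated_square_in_Lspan[OF t(1)] Lspan_mono by blast
    with 2 sq_coords show ?thesis
      by (auto simp: less_Suc_eq_le)
  next
    case 3
    let ?x = "amult n (chain_alg n p) (?sq (n - 3)) (?sq p)"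
    have "?x \<in> ?L (2 ^ (n - 3) + 2 ^ p)"
      using repeated_square_in_Lspan[OF t(1)] repeated_square_in_Lspan[OF t(1)] by (rule Lspan_mult)
    moreover have "?x k \<noteq> 0 \<and> (\<forall>l<k. ?x l = 0)"
    proof -
      have "?x = (\<lambda>l. ?sq (n - 3) (n - 2) * ?sq p (Suc p) * unit_vec (n - 1) l)"
        using sq_coords p_le three_le_n by (intro amult_eq_top_unit_vec) (auto simp: less_Suc_eq_le)
      moreover have "Suc (n - 3) = n - 2"
        using three_le_n by linarith
      then have "?sq (n - 3) (n - 2) \<noteq> 0"
        using sq_coords(2)[of "n - 3"] by simp
      ultimately show ?thesis
        using 3 sq_coords(2)[OF p_le] by (simp add: unit_vec_def)
    qed
    ultimately show ?thesis
      by blast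
  qed
qed

lemma Lspan_chain_alg_eq_carrier_vs:
  fixes S :: "(nat \<Rightarrow> 'a::field) set"
  assumes "S \<subseteq> carrier_vs n" "s \<in> S" "s 1 \<noteq> 0"
  shows "Lspan n (chain_alg n p) S (2 ^ (n - 3) + 2 ^ p) = carrier_vs n"
proof
  let ?L = "Lspan n (chain_alg n p) S"
  show "?L (2 ^ (n - 3) + 2 ^ p) \<subseteq> carrier_vs n"
    using unital_chain_alg assms(1) by (rule Lspan_subset_carrier_vs)
  define t where "t = s - (\<lambda>l. s 0 * unit_vec 0 l)"
  have "s \<in> ?L 1" "unit_vec 0 \<in> ?L 1"
    using word_in_Lspan[OF word_gen[OF assms(2)]] word_in_Lspan[OF word_one[of n "chain_alg n p" S]]
    by (simp_all add: one_elem_chain_alg)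
  then have "t \<in> ?L 1"
    unfolding t_def Lspan_eq_span by (intro coord.span_diff coord.span_scale)
  moreover have "t 0 = 0" "t 1 \<noteq> 0"
    using assms(3) by (simp_all add: t_def unit_vec_def)
  ultimately have "\<exists>x\<in>?L (2 ^ (n - 3) + 2 ^ p). x k \<noteq> 0 \<and> (\<forall>l<k. x l = 0)" if "k < n" for k
    using that by (rule Lspan_has_leading_coord)
  with \<open>?L (2 ^ (n - 3) + 2 ^ p) \<subseteq> carrier_vs n\<close>
  show "carrier_vs n \<subseteq> ?L (2 ^ (n - 3) + 2 ^ p)"
    unfolding Lspan_eq_span by (intro carrier_vs_subset_span_triangular) blast
qed


lemma alg_length_chain_alg:
  "alg_length_is n (chain_alg n p :: nat \<Rightarrow> nat \<Rightarrow> nat \<Rightarrow> 'a::field) (2 ^ (n - 3) + 2 ^ p)"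
proof (rule alg_length_isI[where S\<^sub>0 = "{unit_vec 1}"])
  have "1 < n" "n - 1 < n"
    using three_le_n by linarith+
  then show "{unit_vec 1 :: nat \<Rightarrow> 'a} \<subseteq> carrier_vs n"
    by (simp add: unit_vec_in_carrier_vs)
  then show "Lspan n (chain_alg n p) {unit_vec 1 :: nat \<Rightarrow> 'a} (2 ^ (n - 3) + 2 ^ p)
      = carrier_vs n"
    by (rule Lspan_chain_alg_eq_carrier_vs) (auto simp: unit_vec_def)
  show "Lspan n (chain_alg n p) {unit_vec 1 :: nat \<Rightarrow> 'a} k \<noteq> carrier_vs n"
    if "k < 2 ^ (n - 3) + 2 ^ p" for k
    using unit_vec_top_notin_Lspan[OF that] unit_vec_in_carrier_vs[OF \<open>n - 1 < n\<close>] by blast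
  show "Lspan n (chain_alg n p) S (2 ^ (n - 3) + 2 ^ p) = carrier_vs n"
    if "generates n (chain_alg n p) S" for S :: "(nat \<Rightarrow> 'a) set"
  proof -
    have "\<exists>s\<in>S. s 1 \<noteq> 0"
      using that \<open>1 < n\<close> chain_alg_coord_1_nonzero
      by (intro generator_coord_nonzero) (auto simp: one_elem_chain_alg unit_vec_def)
    moreover have "S \<subseteq> carrier_vs n"
      using that by (simp add: generates_def)
    ultimately show ?thesis
      using Lspan_chain_alg_eq_carrier_vs by blast
  qed
qed simp

end

theorem theorem4p1:
  fixes n p :: nat
  assumes "n > 4" and "p \<le> n - 3"
  shows "\<exists>c :: nat \<Rightarrow> nat \<Rightarrow> nat \<Rightarrow> 'a::field.
           unital n c \<and> alg_length_is n c (2 ^ (n - 3) + 2 ^ p)"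
proof -
  interpret chain_algebra n p
    using assms by unfold_locales auto
  show ?thesis
    using unital_chain_alg alg_length_chain_alg by blast
qed

end
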